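(* Let $(V,Q)$ be a Lorentz space, $T\in PO(Q)$, and let $W\subseteq V_t$ be a minimal $T$-invariant time-like subspace of $V_t$ (time-like: contains $v$ with $Q(v)<0$; minimal among $T$-invariant time-like subspaces). Then exactly one of the following holds: (i) $V_t=V_1$, $\dim W=1$, and $W$ is spanned by a time-like eigenvector of eigenvalue $1$; (ii) $V_t=V_1$, $\dim W\ge2$, and $\ker(T|_W-I)$ is spanned by a single light-like ($Q(v)=0$, $v\ne0$) eigenvector; (iii) $V_t=V_\lambda\oplus V_{\lambda^{-1}}$ with $\lambda\neq1$ real positive, $\dim W=2$, and $W$ is spanned by two light-like eigenvectors with eigenvalues $\lambda$ and $\lambda^{-1}$.
   Context: Lorentz space: real finite-dimensional $V$ with nondegenerate symmetric bilinear $Q$ of signature $(1,n)$; $PO(Q)$: isometries of $Q$ preserving each component of the time-like cone $\{Q(v)<0\}$. Space-time decomposition: $V_s$ is the sum of the real primary components of $T$ (spaces $\ker p(T)^{\dim V}$, $p$ irreducible factor of the characteristic polynomial) on which $Q$ is positive definite, and $V_t$ the sum of the other primary components. $V_\mu=\ker(T-\mu)^{\dim V}$. *)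

theory Defs
  imports "HOL-Analysis.Analysis" "HOL-Computational_Algebra.Polynomial"
    "HOL-Computational_Algebra.Factorial_Ring"
begin

text \<open>The Lorentz space V is modelled as real^'n (dim V = CARD('n)); the quadratic
  form Q is given by its symmetric bilinear form B, with Q(v) = B v v.\<close>

definition lorentz_form :: "(real^'n \<Rightarrow> real^'n \<Rightarrow> real) \<Rightarrow> bool" where
  "lorentz_form B \<longleftrightarrow>
     bilinear B \<and> (\<forall>x y. B x y = B y x) \<and>
     (\<forall>x. (\<forall>y. B x y = 0) \<longrightarrow> x = 0) \<and>
     (\<exists>S. independent S \<and> span S = UNIV \<and> pairwise (\<lambda>u v. B u v = 0) S \<and>
          (\<forall>u\<in>S. B u u \<noteq> 0) \<and> card {u\<in>S. B u u < 0} = 1)"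

definition time_cone :: "(real^'n \<Rightarrow> real^'n \<Rightarrow> real) \<Rightarrow> (real^'n) set" where
  "time_cone B = {v. B v v < 0}"

definition PO :: "(real^'n \<Rightarrow> real^'n \<Rightarrow> real) \<Rightarrow> (real^'n \<Rightarrow> real^'n) set" where
  "PO B = {T. linear T \<and> bij T \<and> (\<forall>x y. B (T x) (T y) = B x y) \<and>
              (\<forall>v\<in>time_cone B. T v \<in> connected_component_set (time_cone B) v)}"

definition time_like :: "(real^'n \<Rightarrow> real^'n \<Rightarrow> real) \<Rightarrow> (real^'n) set \<Rightarrow> bool" where
  "time_like B W \<longleftrightarrow> (\<exists>v\<in>W. B v v < 0)"

definition light_like :: "(real^'n \<Rightarrow> real^'n \<Rightarrow> real) \<Rightarrow> real^'n \<Rightarrow> bool" where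
  "light_like B v \<longleftrightarrow> v \<noteq> 0 \<and> B v v = 0"

definition charpoly :: "(real^'n \<Rightarrow> real^'n) \<Rightarrow> real poly" where
  "charpoly T = det (\<chi> i j. (if i = j then [:0, 1:] else 0) - [: matrix T $ i $ j :])"

definition poly_map :: "real poly \<Rightarrow> (real^'n \<Rightarrow> real^'n) \<Rightarrow> real^'n \<Rightarrow> real^'n" where
  "poly_map p T = (\<lambda>v. \<Sum>i\<le>degree p. coeff p i *\<^sub>R (T ^^ i) v)"

definition primary_comp :: "(real^'n \<Rightarrow> real^'n) \<Rightarrow> real poly \<Rightarrow> (real^'n) set" where
  "primary_comp T p = {v. (poly_map p T ^^ CARD('n)) v = 0}"

definition gen_eigenspace :: "(real^'n \<Rightarrow> real^'n) \<Rightarrow> real \<Rightarrow> (real^'n) set" where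
  "gen_eigenspace T \<mu> = {v. ((\<lambda>w. T w - \<mu> *\<^sub>R w) ^^ CARD('n)) v = 0}"

definition space_part :: "(real^'n \<Rightarrow> real^'n \<Rightarrow> real) \<Rightarrow> (real^'n \<Rightarrow> real^'n) \<Rightarrow> (real^'n) set" where
  "space_part B T = span (\<Union> {primary_comp T p | p. irreducible p \<and> p dvd charpoly T \<and>
       (\<forall>v\<in>primary_comp T p. v \<noteq> 0 \<longrightarrow> B v v > 0)})"

definition time_part :: "(real^'n \<Rightarrow> real^'n \<Rightarrow> real) \<Rightarrow> (real^'n \<Rightarrow> real^'n) \<Rightarrow> (real^'n) set" where
  "time_part B T = span (\<Union> {primary_comp T p | p. irreducible p \<and> p dvd charpoly T \<and>
       \<not> (\<forall>v\<in>primary_comp T p. v \<noteq> 0 \<longrightarrow> B v v > 0)})"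

end

theory Submission imports Defs begin

(*
  Brouwer's fixed point theorem, applied to the compact convex slice
  {x. B x x <= 0, B x e = -1} of the causal cone, yields a non-space-like eigenvector x
  of T with eigenvalue a > 0.  Every primary component of T whose polynomial does not
  vanish at 1/a is B-orthogonal to x.
  * If a = 1, this shows that the time part V_t is the generalised 1-eigenspace.  A minimal
    invariant time-like W then either is the line of a time-like fixed vector (i), or all
    fixed vectors of T in W are null and form one light-like line (ii).
  * If a ~= 1, x is null, T has a null eigenvector w for 1/a with B x w ~= 0, V_t is the
    hyperbolic plane span {x, w} = V_a + V_(1/a), and minimality forces W = V_t (iii).
*)

section \<open>Polynomials and linear algebra\<close>

lemma linear_factor_irreducible: "irreducible [:a, 1::real:]"
proof (rule irreducibleI)
  fix p q assume pq: "[:a,1::real:] = p * q"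
  have "p \<noteq> 0" "q \<noteq> 0" using pq by auto
  then have "degree (p * q) = degree p + degree q" by (intro degree_mult_eq) auto
  moreover have "degree [:a,1::real:] = 1" by simp
  ultimately have "degree p + degree q = 1" using pq by simp
  then have "degree p = 0 \<or> degree q = 0" by arith
  with pq \<open>p \<noteq> 0\<close> \<open>q \<noteq> 0\<close> show "p dvd 1 \<or> q dvd 1"
    by (auto simp: is_unit_poly_iff dvd_field_iff elim!: degree_eq_zeroE)
qed (auto simp: is_unit_poly_iff)

lemma irreducible_root_linear:
  assumes "irreducible p" "poly p (m::real) = 0"
  shows "\<exists>c. c \<noteq> 0 \<and> p = smult c [:-m, 1:]"
proof -
  obtain q where q: "p = [:-m,1:] * q" using assms(2) poly_eq_0_iff_dvd by (metis dvdE)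
  have "\<not> [:-m,1::real:] dvd 1" by (simp add: is_unit_poly_iff)
  with irreducibleD[OF assms(1) q] have "q dvd 1" by blast
  then obtain c where c: "q = [:c:]" "c dvd 1" using is_unit_poly_iff by blast
  then show ?thesis using q by (intro exI[of _ c]) auto
qed

lemma poly_det: "poly (det M) x = det (\<chi> i j. poly (M$i$j) x)"
  unfolding det_def by (simp add: poly_sum poly_prod)

lemma charpoly_eigenvalue:
  fixes T :: "real^'n \<Rightarrow> real^'n"
  assumes "linear T" "T v = m *\<^sub>R v" "v \<noteq> 0"
  shows "[:-m, 1:] dvd charpoly T"
proof -
  define f where "f = (\<lambda>x. m *\<^sub>R x - T x)"
  have lf: "linear f" unfolding f_def
    by (rule linearI) (simp_all add: linear_add[OF assms(1)] linear_cmul[OF assms(1)] algebra_simps)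
  have "f v = f 0" using assms(2) linear_0[OF assms(1)] unfolding f_def by simp
  then have "det (matrix f) = 0" using det_nz_iff_inj[OF lf] assms(3) by (meson injD)
  moreover have "matrix f = (\<chi> i j. poly ((if i = j then [:0, 1:] else 0) - [: matrix T $ i $ j :]) m)"
    unfolding f_def matrix_def using assms(1)
    by (simp add: vec_eq_iff linear_diff[OF assms(1)] axis_def)
  ultimately have "poly (charpoly T) m = 0" unfolding charpoly_def poly_det by simp
  then show ?thesis using poly_eq_0_iff_dvd by blast
qed

lemma linear_funpow: "linear (f::'a::real_vector\<Rightarrow>'a) \<Longrightarrow> linear (f ^^ k)"
proof (induction k)
  case 0 show ?case by (simp add: linearI)
next
  case (Suc k)
  then show ?case using linear_compose[of "f ^^ k" f] by (simp add: o_def)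
qed

lemma funpow_invariant: "(f::'a \<Rightarrow> 'a) ` W \<subseteq> W \<Longrightarrow> z \<in> W \<Longrightarrow> (f ^^ k) z \<in> W"
  by (induction k) auto

lemma last_nonzero_iterate:
  fixes f :: "'a \<Rightarrow> 'a::zero"
  assumes "(f ^^ k) z = 0" "z \<noteq> 0"
  obtains j where "(f ^^ j) z \<noteq> 0" "f ((f ^^ j) z) = 0"
proof -
  define k0 where "k0 = (LEAST k. (f ^^ k) z = 0)"
  have killed: "(f ^^ k0) z = 0" using assms(1) unfolding k0_def by (rule LeastI)
  have "k0 \<noteq> 0" using killed assms(2) by (cases k0) auto
  then have "(f ^^ (k0 - 1)) z \<noteq> 0" unfolding k0_def by (intro not_less_Least) simp
  moreover have "(f ^^ Suc (k0 - 1)) z = 0" using killed \<open>k0 \<noteq> 0\<close> by simp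
  then have "f ((f ^^ (k0 - 1)) z) = 0" by simp
  ultimately show ?thesis using that by blast
qed

lemma span_pair_decompose:
  assumes "z \<in> span {u, w}"
  obtains \<alpha> \<beta> where "z = \<alpha> *\<^sub>R u + \<beta> *\<^sub>R w"
proof -
  obtain \<alpha> where "z - \<alpha> *\<^sub>R u \<in> span {w}" using assms span_breakdown_eq by blast
  then obtain \<beta> where "z - \<alpha> *\<^sub>R u = \<beta> *\<^sub>R w" unfolding span_singleton by blast
  then show ?thesis using that[of \<alpha> \<beta>] by (simp add: algebra_simps)
qed

lemma dim_ge_2:
  fixes W :: "(real^'n) set"
  assumes "subspace W" "u \<in> W" "z \<in> W" "u \<noteq> 0" "z \<notin> span {u}"
  shows "dim W \<ge> 2"
proof -
  have "dim {z, u} = 2" using dim_insert[of z "{u}"] assms(4,5) by simp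
  moreover have "dim {z, u} \<le> dim W" using assms(2,3) by (intro dim_subset) simp
  ultimately show ?thesis by simp
qed

lemma square_ne_one:
  assumes "(a::real) > 0" "a \<noteq> 1"
  shows "a * a \<noteq> 1"
proof
  assume "a * a = 1"
  then have "(a - 1) * (a + 1) = 0" by (simp add: algebra_simps)
  with assms show False by simp
qed

lemma inverse_ne_self:
  assumes "(a::real) > 0" "a \<noteq> 1"
  shows "inverse a \<noteq> a"
proof
  assume "inverse a = a"
  moreover have "a * inverse a = 1" using assms(1) by simp
  ultimately show False using square_ne_one[OF assms] by simp
qed


section \<open>Lorentz forms\<close>

locale lorentz =
  fixes B :: "real^'n \<Rightarrow> real^'n \<Rightarrow> real"
  assumes lorentz: "lorentz_form B"
begin

lemma bilinear: "bilinear B" using lorentz unfolding lorentz_form_def by blast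
lemma symmetric: "B x y = B y x" using lorentz unfolding lorentz_form_def by blast
lemma nondegenerate: "x \<noteq> 0 \<Longrightarrow> \<exists>y. B x y \<noteq> 0" using lorentz unfolding lorentz_form_def by blast

lemma B_ladd[simp]: "B (x + y) z = B x z + B y z" using bilinear_ladd[OF bilinear] .
lemma B_radd[simp]: "B x (y + z) = B x y + B x z" using bilinear_radd[OF bilinear] .
lemma B_lmul[simp]: "B (c *\<^sub>R x) y = c * B x y" using bilinear_lmul[OF bilinear] by simp
lemma B_rmul[simp]: "B x (c *\<^sub>R y) = c * B x y" using bilinear_rmul[OF bilinear] by simp
lemma B_lsub[simp]: "B (x - y) z = B x z - B y z" using bilinear_lsub[OF bilinear] .
lemma B_rsub[simp]: "B x (y - z) = B x y - B x z" using bilinear_rsub[OF bilinear] .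
lemma B_lneg[simp]: "B (- x) y = - B x y" using bilinear_lneg[OF bilinear] .
lemma B_rneg[simp]: "B x (- y) = - B x y" using bilinear_rneg[OF bilinear] .
lemma B_lzero[simp]: "B 0 y = 0" using bilinear_lzero[OF bilinear] .
lemma B_rzero[simp]: "B x 0 = 0" using bilinear_rzero[OF bilinear] .

lemma linear_left: "linear (\<lambda>x. B x y)"
  using bilinear unfolding bilinear_def by blast

lemma continuous_on_form:
  fixes f g :: "'a::t2_space \<Rightarrow> real^'n"
  shows "continuous_on S f \<Longrightarrow> continuous_on S g \<Longrightarrow> continuous_on S (\<lambda>x. B (f x) (g x))"
  by (rule bilinear_continuous_on_compose[OF _ _ bilinear])

lemma orthogonal_span:
  assumes "\<And>f. f \<in> F \<Longrightarrow> B f s = 0" "z \<in> span F"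
  shows "B z s = 0"
  using linear_eq_0_on_span[OF linear_left, of F s z] assms by auto

lemma positive_span:
  assumes "finite F" "\<And>s. s \<in> F \<Longrightarrow> B s s > 0"
    "\<And>s t. s \<in> F \<Longrightarrow> t \<in> F \<Longrightarrow> s \<noteq> t \<Longrightarrow> B s t = 0"
  shows "y \<in> span F \<Longrightarrow> B y y \<ge> 0 \<and> (B y y = 0 \<longrightarrow> y = 0)"
  using assms
proof (induction F arbitrary: y rule: finite_induct)
  case empty
  then show ?case by simp
next
  case (insert s F)
  from insert.prems(1) obtain k where zF: "y - k *\<^sub>R s \<in> span F"
    using span_breakdown_eq by blast
  define z where "z = y - k *\<^sub>R s"
  have y: "y = z + k *\<^sub>R s" unfolding z_def by simp
  have zs: "B z s = 0"
    by (rule orthogonal_span[of F]) (use insert zF z_def in auto)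
  have sz: "B s z = 0" using zs symmetric[of s z] by simp
  have IH: "B z z \<ge> 0 \<and> (B z z = 0 \<longrightarrow> z = 0)"
    using insert.IH[of z] zF insert.prems unfolding z_def by auto
  have ss: "B s s > 0" using insert by auto
  have eq: "B y y = B z z + k * k * B s s"
    unfolding y by (simp add: zs sz algebra_simps)
  have kss: "k * k * B s s \<ge> 0" using ss by simp
  moreover have "y = 0" if "B y y = 0"
  proof -
    have "B z z = 0" "k * k * B s s = 0" using that eq IH kss by linarith+
    with IH ss show "y = 0" unfolding y by simp
  qed
  ultimately show ?case using eq IH by simp
qed

lemma signature:
  obtains s0 where "B s0 s0 < 0" "\<And>z. B z s0 = 0 \<Longrightarrow> z = 0 \<or> B z z > 0"
proof -
  obtain S where S: "independent S" "span S = UNIV" "pairwise (\<lambda>u v. B u v = 0) S"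
    "\<forall>u\<in>S. B u u \<noteq> 0" "card {u\<in>S. B u u < 0} = 1"
    using lorentz unfolding lorentz_form_def by blast
  obtain s0 where s0: "{u\<in>S. B u u < 0} = {s0}" using S(5) card_1_singletonE by blast
  have s0S: "s0 \<in> S" "B s0 s0 < 0" using s0 by auto
  define F where "F = S - {s0}"
  have SF: "S = insert s0 F" using s0S(1) unfolding F_def by auto
  have Fpos: "B s s > 0" if "s \<in> F" for s
  proof -
    have "s \<in> S" "s \<noteq> s0" using that unfolding F_def by auto
    then have "B s s \<noteq> 0" "\<not> B s s < 0" using S(4) s0 by auto
    then show ?thesis by simp
  qed
  have Forth: "B s t = 0" if "s \<in> F" "t \<in> F" "s \<noteq> t" for s t
    using S(3) that unfolding F_def pairwise_def by auto
  have Ffin: "finite F" using independent_bound_general[OF S(1)] unfolding F_def by simp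
  have "z = 0 \<or> B z z > 0" if z: "B z s0 = 0" for z
  proof -
    have "z \<in> span (insert s0 F)" using S(2) SF by simp
    then obtain k where k: "z - k *\<^sub>R s0 \<in> span F" using span_breakdown_eq by blast
    have "B (z - k *\<^sub>R s0) s0 = 0"
      by (rule orthogonal_span[OF _ k]) (use S(3) s0S in \<open>auto simp: F_def pairwise_def\<close>)
    then have "k = 0" using z s0S by simp
    then show ?thesis using positive_span[OF Ffin Fpos Forth] k by force
  qed
  with s0S that show ?thesis by blast
qed

lemma timelike_complement_spacelike:
  assumes e: "B e e < 0" and ye: "B y e = 0"
  shows "y = 0 \<or> B y y > 0"
proof (rule ccontr)
  assume "\<not> ?thesis"
  then have y0: "y \<noteq> 0" and yy: "B y y \<le> 0" by auto
  obtain s0 where s0: "B s0 s0 < 0" "\<And>z. B z s0 = 0 \<Longrightarrow> z = 0 \<or> B z z > 0"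
    using signature by blast
  define a where "a = B y s0"
  define b where "b = - B e s0"
  have ab: "a \<noteq> 0 \<or> b \<noteq> 0" using s0(2)[of e] e unfolding b_def by auto
  define z where "z = a *\<^sub>R e + b *\<^sub>R y"
  have ey: "B e y = 0" using ye symmetric[of e y] by simp
  have "B z s0 = 0" unfolding z_def a_def b_def by (simp add: algebra_simps)
  moreover have "B z z = a * a * B e e + b * b * B y y"
    unfolding z_def by (simp add: ye ey algebra_simps)
  moreover have "a * a * B e e \<le> 0" "b * b * B y y \<le> 0"
    using e yy by (simp_all add: mult_nonneg_nonpos)
  ultimately have z0: "z = 0" using s0(2) by fastforce
  then have "B z e = 0" by simp
  then have "a * B e e = 0" unfolding z_def by (simp add: ye)
  then have "a = 0" using e by simp
  with z0 y0 have "b = 0" unfolding z_def by simp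
  with \<open>a = 0\<close> ab show False by simp
qed

lemma timelike_exists: obtains e where "B e e < 0"
  using signature by blast

lemma null_orthogonal_proportional:
  assumes "B v v = 0" "B w w = 0" "B v w = 0" "w \<noteq> 0"
  shows "\<exists>c. v = c *\<^sub>R w"
proof -
  obtain s0 where s0: "B s0 s0 < 0" using timelike_exists by blast
  define a where "a = B v s0"
  define b where "b = B w s0"
  have b0: "b \<noteq> 0" using timelike_complement_spacelike[OF s0, of w] assms unfolding b_def by auto
  define z where "z = b *\<^sub>R v - a *\<^sub>R w"
  have wv: "B w v = 0" using assms symmetric[of w v] by simp
  have "B z s0 = 0" unfolding z_def a_def b_def by (simp add: algebra_simps)
  moreover have "B z z = 0" unfolding z_def using assms wv by (simp add: algebra_simps)
  ultimately have "z = 0" using timelike_complement_spacelike[OF s0] by fastforce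
  then have "inverse b *\<^sub>R (b *\<^sub>R v) = inverse b *\<^sub>R (a *\<^sub>R w)" unfolding z_def by simp
  then have "v = (a / b) *\<^sub>R w" using b0 by (simp add: divide_inverse_commute)
  then show ?thesis by blast
qed

lemma causal_orthogonal_proportional:
  assumes x0: "x \<noteq> 0" and xx: "B x x \<le> 0" and yx: "B y x = 0" and yy: "B y y \<le> 0"
  shows "\<exists>c. y = c *\<^sub>R x"
proof (cases "B x x < 0")
  case True
  from timelike_complement_spacelike[OF True yx] yy show ?thesis by (intro exI[of _ 0]) auto
next
  case False
  then have xx0: "B x x = 0" using xx by simp
  have "B y y = 0"
  proof (rule ccontr)
    assume "B y y \<noteq> 0"
    then have "B y y < 0" using yy by simp
    from timelike_complement_spacelike[OF this, of x] yx symmetric[of x y] x0 xx0 show False by simp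
  qed
  from null_orthogonal_proportional[OF this xx0 yx x0] show ?thesis .
qed

lemma hyperbolic_complement_spacelike:
  assumes "B v v = 0" "B w w = 0" "B v w \<noteq> 0" "B z v = 0" "B z w = 0"
  shows "z = 0 \<or> B z z > 0"
proof -
  define e where "e = v - B v w *\<^sub>R w"
  have "B w v = B v w" by (rule symmetric)
  then have "B e e = - 2 * (B v w)^2" unfolding e_def using assms
    by (simp add: algebra_simps power2_eq_square)
  then have "B e e < 0" using assms(3) by simp
  moreover have "B z e = 0" unfolding e_def using assms by simp
  ultimately show ?thesis using timelike_complement_spacelike by blast
qed

lemma timelike_complement_coercive:
  assumes e: "B e e < 0"
  obtains m where "m > 0" "\<And>y. B y e = 0 \<Longrightarrow> B y y \<ge> m * (norm y)^2"
proof -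
  let ?K = "sphere 0 1 \<inter> {y. B y e = 0}"
  have scale: "(1 / norm y) *\<^sub>R y \<in> ?K" if "B y e = 0" "y \<noteq> 0" for y
    using that by simp
  show ?thesis
  proof (cases "?K = {}")
    case True
    then have "B y y \<ge> 1 * (norm y)^2" if "B y e = 0" for y
      using scale[OF that] by (cases "y = 0") auto
    then show ?thesis using that[of 1] by simp
  next
    case False
    have "compact ?K"
      by (rule compact_Int_closed[OF compact_sphere])
        (rule closed_Collect_eq[OF continuous_on_form[OF continuous_on_id continuous_on_const]
          continuous_on_const])
    moreover have "continuous_on ?K (\<lambda>y. B y y)"
      by (rule continuous_on_form[OF continuous_on_id continuous_on_id])
    ultimately obtain z where z: "z \<in> ?K" "\<And>y. y \<in> ?K \<Longrightarrow> B z z \<le> B y y"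
      using continuous_attains_inf[OF _ False] by blast
    have m: "B z z > 0" using timelike_complement_spacelike[OF e] z(1) by fastforce
    have "B y y \<ge> B z z * (norm y)^2" if "B y e = 0" for y
    proof (cases "y = 0")
      case False
      have "B z z \<le> B ((1 / norm y) *\<^sub>R y) ((1 / norm y) *\<^sub>R y)" by (rule z(2)[OF scale[OF that False]])
      also have "\<dots> = B y y / (norm y)^2" by (simp add: power2_eq_square)
      finally show ?thesis using False by (simp add: field_simps)
    qed simp
    then show ?thesis using that m by blast
  qed
qed

text \<open>The causal slice cut out by a time-like vector e: a compact convex section of the
  future causal cone, to which Brouwer's theorem will be applied.\<close>
definition causal_slice :: "real^'n \<Rightarrow> (real^'n) set" where
  "causal_slice e = {x. B x x \<le> 0 \<and> B x e = -1}"

lemma causal_slice_nonempty: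
  assumes e: "B e e < 0"
  shows "causal_slice e \<noteq> {}"
proof -
  define c where "c = - 1 / B e e"
  have "c * B e e = -1" "c * (c * B e e) \<le> 0"
    unfolding c_def using e by (simp_all add: mult_nonneg_nonpos divide_neg_neg)
  then have "c *\<^sub>R e \<in> causal_slice e" unfolding causal_slice_def by simp
  then show ?thesis by blast
qed

lemma causal_slice_convex:
  assumes e: "B e e < 0"
  shows "convex (causal_slice e)"
  unfolding convex_def
proof (intro ballI allI impI)
  fix x y and u v :: real
  assume xy: "x \<in> causal_slice e" "y \<in> causal_slice e" and uv: "0 \<le> u" "0 \<le> v" "u + v = 1"
  have yx: "B y x = B x y" by (rule symmetric)
  have "B (x - y) e = 0" using xy unfolding causal_slice_def by simp
  then have "B (x - y) (x - y) \<ge> 0" using timelike_complement_spacelike[OF e] by fastforce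
  then have "B x y \<le> 0" using xy yx unfolding causal_slice_def by (simp add: algebra_simps)
  then have "u * u * B x x \<le> 0" "2 * u * v * B x y \<le> 0" "v * v * B y y \<le> 0"
    using xy uv unfolding causal_slice_def by (simp_all add: mult_nonneg_nonpos)
  moreover have "B (u *\<^sub>R x + v *\<^sub>R y) (u *\<^sub>R x + v *\<^sub>R y)
      = u * u * B x x + 2 * u * v * B x y + v * v * B y y"
    using yx by (simp add: algebra_simps)
  ultimately have "B (u *\<^sub>R x + v *\<^sub>R y) (u *\<^sub>R x + v *\<^sub>R y) \<le> 0" by linarith
  moreover have "B (u *\<^sub>R x + v *\<^sub>R y) e = -1"
    using xy uv unfolding causal_slice_def by (simp add: algebra_simps)
  ultimately show "u *\<^sub>R x + v *\<^sub>R y \<in> causal_slice e" unfolding causal_slice_def by simp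
qed

lemma causal_slice_bounded:
  assumes e: "B e e < 0"
  shows "bounded (causal_slice e)"
proof -
  obtain m where m: "m > 0" "\<And>y. B y e = 0 \<Longrightarrow> B y y \<ge> m * (norm y)^2"
    using timelike_complement_coercive[OF e] by blast
  define c where "c = - 1 / B e e"
  have ce: "c * B e e = -1" unfolding c_def using e by simp
  define M where "M = - (c * c * B e e)"
  have "norm x \<le> norm (c *\<^sub>R e) + max 1 (M / m)" if x: "x \<in> causal_slice e" for x
  proof -
    define y where "y = x - c *\<^sub>R e"
    have ye: "B y e = 0" unfolding y_def using x ce unfolding causal_slice_def by simp
    have ey: "B e y = 0" using ye symmetric[of e y] by simp
    have "B x x = c * c * B e e + B y y"
      unfolding y_def using ye ey by (simp add: algebra_simps y_def)
    then have "B y y \<le> M" using x unfolding causal_slice_def M_def by simp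
    with m(2)[OF ye] have "m * (norm y)^2 \<le> M" by simp
    then have ny: "(norm y)^2 \<le> M / m" using m(1) by (simp add: field_simps)
    have "norm y \<le> max 1 (M / m)"
    proof (cases "norm y \<le> 1")
      case False
      then have "norm y * 1 \<le> norm y * norm y" by (intro mult_left_mono) auto
      then have "norm y \<le> (norm y)^2" by (simp add: power2_eq_square)
      with ny show ?thesis by simp
    qed simp
    moreover have "norm x \<le> norm (c *\<^sub>R e) + norm y"
      using norm_triangle_ineq[of "c *\<^sub>R e" y] unfolding y_def by simp
    ultimately show ?thesis by simp
  qed
  then show ?thesis unfolding bounded_iff by blast
qed

lemma causal_slice_compact:
  assumes e: "B e e < 0"
  shows "compact (causal_slice e)"
proof -
  have "causal_slice e = {x. B x x \<le> 0} \<inter> {x. B x e = -1}" unfolding causal_slice_def by auto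
  moreover have "closed {x. B x x \<le> 0}"
    by (rule closed_Collect_le[OF continuous_on_form[OF continuous_on_id continuous_on_id]
          continuous_on_const])
  moreover have "closed {x. B x e = -1}"
    by (rule closed_Collect_eq[OF continuous_on_form[OF continuous_on_id continuous_on_const]
          continuous_on_const])
  ultimately show ?thesis using causal_slice_bounded[OF e] compact_eq_bounded_closed by auto
qed

end


section \<open>Lorentz isometries\<close>

definition space_like_set :: "(real^'n \<Rightarrow> real^'n \<Rightarrow> real) \<Rightarrow> (real^'n) set \<Rightarrow> bool" where
  "space_like_set B X \<longleftrightarrow> (\<forall>v\<in>X. v \<noteq> 0 \<longrightarrow> B v v > 0)"

locale lorentz_isometry = lorentz B for B :: "real^'n \<Rightarrow> real^'n \<Rightarrow> real" +
  fixes T :: "real^'n \<Rightarrow> real^'n"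
  assumes T_PO: "T \<in> PO B"
begin

lemma linear_T: "linear T" using T_PO unfolding PO_def by blast
lemma inj_T: "inj T" using T_PO unfolding PO_def bij_def by blast
lemma isometry[simp]: "B (T x) (T y) = B x y" using T_PO unfolding PO_def by blast
lemma preserves_cone_components:
  "v \<in> time_cone B \<Longrightarrow> T v \<in> connected_component_set (time_cone B) v"
  using T_PO unfolding PO_def by blast

lemma T_add[simp]: "T (x + y) = T x + T y" using linear_add[OF linear_T] .
lemma T_diff[simp]: "T (x - y) = T x - T y" using linear_diff[OF linear_T] .
lemma T_scale[simp]: "T (c *\<^sub>R x) = c *\<^sub>R T x" using linear_cmul[OF linear_T] .
lemma T_zero[simp]: "T 0 = 0" using linear_0[OF linear_T] .

lemma linear_shift: "linear (\<lambda>w. T w - m *\<^sub>R w)"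
  by (rule linearI) (simp_all add: algebra_simps)

lemma subspace_gen_eigenspace: "subspace (gen_eigenspace T m)"
  unfolding gen_eigenspace_def
  using real_vector.linear_subspace_kernel[OF linear_funpow[OF linear_shift]] .

lemma eigenvector_in_gen_eigenspace: "T x = m *\<^sub>R x \<Longrightarrow> x \<in> gen_eigenspace T m"
proof -
  assume Tx: "T x = m *\<^sub>R x"
  have "((\<lambda>w. T w - m *\<^sub>R w) ^^ k) x = (if k = 0 then x else 0)" for k
    by (induction k) (simp_all add: Tx)
  then show ?thesis unfolding gen_eigenspace_def by simp
qed

text \<open>Since T is an isometry, its adjoint acts on an eigenvector v for a by 1/a.\<close>
lemma pairing_eigenvector:
  assumes "T v = a *\<^sub>R v" "a \<noteq> 0"
  shows "B (T y) v = inverse a * B y v"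
proof -
  have "B (T y) v = B (T y) (T (inverse a *\<^sub>R v))" using assms by simp
  also have "\<dots> = inverse a * B y v" by simp
  finally show ?thesis .
qed

lemma pairing_shift_power:
  assumes "T v = a *\<^sub>R v" "a \<noteq> 0"
  shows "B (((\<lambda>w. T w - m *\<^sub>R w) ^^ k) y) v = (inverse a - m) ^ k * B y v"
  by (induction k) (simp_all add: pairing_eigenvector[OF assms] algebra_simps)

lemma pairing_power:
  assumes "T v = a *\<^sub>R v" "a \<noteq> 0"
  shows "B ((T ^^ i) y) v = (inverse a) ^ i * B y v"
  by (induction i) (simp_all add: pairing_eigenvector[OF assms] algebra_simps)

lemma pairing_poly_map:
  assumes "T v = a *\<^sub>R v" "a \<noteq> 0"
  shows "B (poly_map p T y) v = poly p (inverse a) * B y v"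
proof -
  have "B (poly_map p T y) v = (\<Sum>i\<le>degree p. B (coeff p i *\<^sub>R (T ^^ i) y) v)"
    unfolding poly_map_def
    using linear_sum[OF linear_left, of "\<lambda>i. coeff p i *\<^sub>R (T ^^ i) y" "{..degree p}" v] by simp
  also have "\<dots> = poly p (inverse a) * B y v"
    by (simp add: pairing_power[OF assms] sum_distrib_right mult.assoc poly_altdef)
  finally show ?thesis .
qed

lemma primary_comp_orthogonal:
  assumes "T v = a *\<^sub>R v" "a \<noteq> 0" "poly p (inverse a) \<noteq> 0" "z \<in> primary_comp T p"
  shows "B z v = 0"
proof -
  have "B ((poly_map p T ^^ k) z) v = (poly p (inverse a)) ^ k * B z v" for k
    by (induction k) (simp_all add: pairing_poly_map[OF assms(1,2)])
  from this[of "CARD('n)"] assms(3,4) show ?thesis unfolding primary_comp_def by simp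
qed

lemma poly_map_eigenvector:
  assumes "T x = m *\<^sub>R x"
  shows "(poly_map p T ^^ k) x = (poly p m) ^ k *\<^sub>R x"
proof (induction k)
  case 0 then show ?case by simp
next
  case (Suc k)
  have "(T ^^ i) x = m ^ i *\<^sub>R x" for i
    by (induction i) (simp_all add: assms)
  then have eigen: "poly_map p T x = poly p m *\<^sub>R x"
    unfolding poly_map_def poly_altdef by (simp add: scaleR_sum_left)
  have "(poly_map p T ^^ Suc k) x = poly_map p T ((poly p m) ^ k *\<^sub>R x)" using Suc by simp
  also have "\<dots> = (poly p m) ^ k *\<^sub>R poly_map p T x"
    unfolding poly_map_def
    by (simp add: scaleR_sum_right linear_cmul[OF linear_funpow[OF linear_T]] mult.commute)
  also have "\<dots> = (poly p m) ^ Suc k *\<^sub>R x" by (simp add: eigen)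
  finally show ?case .
qed

lemma primary_comp_eigenvector:
  assumes "T z = m *\<^sub>R z" "z \<noteq> 0" "z \<in> primary_comp T p"
  shows "poly p m = 0"
  using assms poly_map_eigenvector[OF assms(1), where p=p and k="CARD('n)"] unfolding primary_comp_def by simp

lemma primary_comp_root:
  assumes "irreducible p" "poly p m = 0"
  shows "primary_comp T p = gen_eigenspace T m"
proof -
  obtain c where c: "c \<noteq> 0" "p = smult c [:-m, 1:]" using irreducible_root_linear[OF assms] by blast
  have pm: "poly_map p T = (\<lambda>w. c *\<^sub>R (T w - m *\<^sub>R w))"
    using c unfolding poly_map_def by (auto simp: algebra_simps)
  have "((\<lambda>w. c *\<^sub>R (T w - m *\<^sub>R w)) ^^ k) w = c ^ k *\<^sub>R ((\<lambda>w. T w - m *\<^sub>R w) ^^ k) w" for k w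
    by (induction k) (simp_all add: algebra_simps)
  then show ?thesis unfolding primary_comp_def gen_eigenspace_def pm using c(1) by simp
qed

lemma time_part_minimal:
  assumes "subspace S"
    and "\<And>p. irreducible p \<Longrightarrow> \<not> space_like_set B (primary_comp T p) \<Longrightarrow> primary_comp T p \<subseteq> S"
  shows "time_part B T \<subseteq> S"
  unfolding time_part_def using assms
  by (intro span_minimal) (auto simp: space_like_set_def)

lemma gen_eigenspace_in_time_part:
  assumes "T x = m *\<^sub>R x" "x \<noteq> 0" "B x x \<le> 0"
  shows "gen_eigenspace T m \<subseteq> time_part B T"
proof -
  have comp: "primary_comp T [:-m,1:] = gen_eigenspace T m"
    using primary_comp_root[OF linear_factor_irreducible] by simp
  have "x \<in> primary_comp T [:-m,1:]" using comp eigenvector_in_gen_eigenspace[OF assms(1)] by simp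
  then have "primary_comp T [:-m,1:] \<in> {primary_comp T p | p. irreducible p \<and> p dvd charpoly T \<and>
       \<not> (\<forall>v\<in>primary_comp T p. v \<noteq> 0 \<longrightarrow> B v v > 0)}"
    using assms(2,3) linear_factor_irreducible charpoly_eigenvalue[OF linear_T assms(1,2)] by force
  then show ?thesis unfolding time_part_def comp[symmetric] by (blast intro: span_base)
qed

lemma time_part_fixed_vector:
  assumes x0: "x \<noteq> 0" and Tx: "T x = x" and xx: "B x x \<le> 0"
  shows "time_part B T = gen_eigenspace T 1"
proof
  show "gen_eigenspace T 1 \<subseteq> time_part B T"
    using gen_eigenspace_in_time_part[of x 1] assms by simp
  show "time_part B T \<subseteq> gen_eigenspace T 1"
  proof (rule time_part_minimal[OF subspace_gen_eigenspace])
    fix p assume p: "irreducible p" "\<not> space_like_set B (primary_comp T p)"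
    have "poly p 1 = 0"
    proof (rule ccontr)
      assume p1: "poly p 1 \<noteq> 0"
      have "B z z > 0" if z: "z \<in> primary_comp T p" "z \<noteq> 0" for z
      proof (rule ccontr)
        assume "\<not> B z z > 0"
        moreover have "B z x = 0" using primary_comp_orthogonal[of x 1 p z] Tx p1 z by simp
        ultimately obtain c where "z = c *\<^sub>R x"
          using causal_orthogonal_proportional[OF x0 xx] by fastforce
        then have "T z = 1 *\<^sub>R z" using Tx by simp
        with primary_comp_eigenvector z p1 show False by blast
      qed
      with p(2) show False unfolding space_like_set_def by blast
    qed
    then show "primary_comp T p \<subseteq> gen_eigenspace T 1" using primary_comp_root p(1) by simp
  qed
qed

definition hyperbolic_pair :: "real \<Rightarrow> real^'n \<Rightarrow> real^'n \<Rightarrow> bool" where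
  "hyperbolic_pair a v w \<longleftrightarrow> a > 0 \<and> a \<noteq> 1 \<and> T v = a *\<^sub>R v \<and> T w = inverse a *\<^sub>R w \<and>
     B v v = 0 \<and> B w w = 0 \<and> B v w \<noteq> 0"

lemma hyperbolic_pair_swap: "hyperbolic_pair a v w \<Longrightarrow> hyperbolic_pair (inverse a) w v"
  unfolding hyperbolic_pair_def by (auto simp: symmetric[of w v])

lemma hyperbolic_pair_exists:
  assumes x: "x \<noteq> 0" "a > 0" "a \<noteq> 1" "T x = a *\<^sub>R x"
  obtains w where "hyperbolic_pair a x w"
proof -
  have a0: "a \<noteq> 0" using x(2) by simp
  have null: "B y y = 0" if "T y = c *\<^sub>R y" "c * c \<noteq> 1" for y c
  proof -
    have "B y y = (c * c) * B y y" using isometry[of y y] that(1) by simp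
    then show ?thesis using that(2) by (metis mult_cancel_right1)
  qed
  let ?f = "\<lambda>y. T y - inverse a *\<^sub>R y"
  have "\<not> surj ?f"
  proof
    assume "surj ?f"
    obtain y0 where y0: "B x y0 \<noteq> 0" using nondegenerate[OF x(1)] by blast
    from \<open>surj ?f\<close> obtain y' where "y0 = ?f y'" by (rule surjE)
    then have "B y0 x = 0" using pairing_eigenvector[OF x(4) a0] by simp
    with y0 symmetric[of x y0] show False by simp
  qed
  then have "\<not> inj ?f" using linear_injective_imp_surjective[OF linear_shift] by blast
  then obtain w where w0: "w \<noteq> 0" and "?f w = 0"
    using linear_inj_iff_eq_0[OF linear_shift] by blast
  then have Tw: "T w = inverse a *\<^sub>R w" by simp
  have aa: "a * a \<noteq> 1" "inverse a * inverse a \<noteq> 1"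
    using square_ne_one[OF x(2,3)] by (auto simp: field_simps)
  have xx: "B x x = 0" and ww: "B w w = 0" using null x(4) Tw aa by auto
  have "B x w \<noteq> 0"
  proof
    assume "B x w = 0"
    then obtain c where "x = c *\<^sub>R w" using null_orthogonal_proportional[OF xx ww _ w0] by blast
    then have "T x = inverse a *\<^sub>R x" using Tw by simp
    then have "a *\<^sub>R x = inverse a *\<^sub>R x" using x(4) by simp
    then have "a = inverse a" using x(1) by (metis scaleR_cancel_right)
    with inverse_ne_self[OF x(2,3)] show False by simp
  qed
  then show ?thesis using that x Tw xx ww unfolding hyperbolic_pair_def by blast
qed

lemma gen_eigenspace_hyperbolic:
  assumes hp: "hyperbolic_pair a v w"
  shows "gen_eigenspace T a = span {v}"
proof
  have a: "a > 0" "a \<noteq> 1" and Tv: "T v = a *\<^sub>R v" and Tw: "T w = inverse a *\<^sub>R w"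
    and vv: "B v v = 0" and ww: "B w w = 0" and vw: "B v w \<noteq> 0"
    using hp unfolding hyperbolic_pair_def by auto
  have a0: "a \<noteq> 0" using a by simp
  let ?g = "\<lambda>u. T u - a *\<^sub>R u"
  (* A generalised eigenvector orthogonal to v and w vanishes: induct on the nilpotency
     index; an honest eigenvector for a is null because a * a ~= 1, and a null vector
     orthogonal to the hyperbolic plane is zero. *)
  have orthogonal_vanishes: "(?g ^^ k) z = 0 \<Longrightarrow> B z v = 0 \<Longrightarrow> B z w = 0 \<Longrightarrow> z = 0" for k z
  proof (induction k arbitrary: z)
    case 0 then show ?case by simp
  next
    case (Suc k)
    have "(?g ^^ k) (?g z) = 0" using Suc.prems(1) by (simp add: funpow_Suc_right del: funpow.simps)
    moreover have "B (?g z) v = 0" "B (?g z) w = 0"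
      using pairing_eigenvector[OF Tv a0] pairing_eigenvector[OF Tw] a0 Suc.prems by simp_all
    ultimately have "T z = a *\<^sub>R z" using Suc.IH by fastforce
    then have "B z z = (a * a) * B z z" using isometry[of z z] by simp
    then have "B z z = 0" using square_ne_one[OF a] by (metis mult_cancel_right1)
    with hyperbolic_complement_spacelike[OF vv ww vw Suc.prems(2,3)] show ?case by simp
  qed
  show "gen_eigenspace T a \<subseteq> span {v}"
  proof
    fix y assume "y \<in> gen_eigenspace T a"
    then have y0: "(?g ^^ CARD('n)) y = 0" unfolding gen_eigenspace_def by simp
    have "(inverse a - a) ^ CARD('n) * B y v = 0"
      using y0 pairing_shift_power[OF Tv a0, where m=a and k="CARD('n)" and y=y] by simp
    then have yv: "B y v = 0" using inverse_ne_self[OF a] by simp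
    define c where "c = B y w / B v w"
    have "(?g ^^ CARD('n)) v = 0"
      using eigenvector_in_gen_eigenspace[OF Tv] unfolding gen_eigenspace_def by simp
    then have "(?g ^^ CARD('n)) (y - c *\<^sub>R v) = 0"
      using y0 linear_funpow[OF linear_shift[of a], of "CARD('n)"]
      by (simp add: linear_diff linear_cmul)
    moreover have "B (y - c *\<^sub>R v) v = 0" "B (y - c *\<^sub>R v) w = 0"
      using yv vv vw unfolding c_def by simp_all
    ultimately have "y = c *\<^sub>R v" using orthogonal_vanishes by fastforce
    then show "y \<in> span {v}" by (simp add: span_base span_scale)
  qed
  show "span {v} \<subseteq> gen_eigenspace T a"
    using span_minimal[OF _ subspace_gen_eigenspace] eigenvector_in_gen_eigenspace[OF Tv] by blast
qed

text \<open>For a hyperbolic pair, the time part is the hyperbolic plane span {v, w}: every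
  other primary component is orthogonal to v and w, hence space-like.\<close>
lemma time_part_hyperbolic:
  assumes hp: "hyperbolic_pair a v w"
  shows "time_part B T = span {v, w}"
proof
  have a0: "a \<noteq> 0" and Tv: "T v = a *\<^sub>R v" and Tw: "T w = inverse a *\<^sub>R w"
    and vv: "B v v = 0" and ww: "B w w = 0" and vw: "B v w \<noteq> 0"
    using hp unfolding hyperbolic_pair_def by auto
  have v0: "v \<noteq> 0" and w0: "w \<noteq> 0" using vw by auto
  have "v \<in> time_part B T" "w \<in> time_part B T"
    using gen_eigenspace_in_time_part[OF Tv v0] gen_eigenspace_in_time_part[OF Tw w0]
      eigenvector_in_gen_eigenspace[OF Tv] eigenvector_in_gen_eigenspace[OF Tw] vv ww by auto
  then show "span {v, w} \<subseteq> time_part B T"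
    unfolding time_part_def by (simp add: span_minimal)
  show "time_part B T \<subseteq> span {v, w}"
  proof (rule time_part_minimal[OF subspace_span])
    fix p assume p: "irreducible p" "\<not> space_like_set B (primary_comp T p)"
    consider "poly p a = 0" | "poly p (inverse a) = 0" | "poly p a \<noteq> 0" "poly p (inverse a) \<noteq> 0"
      by blast
    then show "primary_comp T p \<subseteq> span {v, w}"
    proof cases
      case 1
      then show ?thesis using primary_comp_root[OF p(1)] gen_eigenspace_hyperbolic[OF hp]
        span_mono[of "{v}" "{v, w}"] by auto
    next
      case 2
      then show ?thesis
        using primary_comp_root[OF p(1)] gen_eigenspace_hyperbolic[OF hyperbolic_pair_swap[OF hp]]
          span_mono[of "{w}" "{v, w}"] by auto
    next
      case 3
      have "B z z > 0" if "z \<in> primary_comp T p" "z \<noteq> 0" for z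
      proof -
        have "B z v = 0" using primary_comp_orthogonal[OF Tv a0 3(2) that(1)] .
        moreover have "B z w = 0" using primary_comp_orthogonal[OF Tw _ _ that(1)] a0 3(1) by simp
        ultimately show ?thesis using hyperbolic_complement_spacelike[OF vv ww vw] that(2) by blast
      qed
      with p(2) show ?thesis unfolding space_like_set_def by blast
    qed
  qed
qed

lemma time_part_hyperbolic_decomposition:
  assumes hp: "hyperbolic_pair a v w"
  shows "time_part B T = {x + y | x y. x \<in> gen_eigenspace T a \<and> y \<in> gen_eigenspace T (inverse a)}"
    and "gen_eigenspace T a \<inter> gen_eigenspace T (inverse a) = {0}"
proof -
  have G: "gen_eigenspace T a = span {v}" "gen_eigenspace T (inverse a) = span {w}"
    using gen_eigenspace_hyperbolic[OF hp] gen_eigenspace_hyperbolic[OF hyperbolic_pair_swap[OF hp]]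
    by simp_all
  have "time_part B T = span ({v} \<union> {w})" using time_part_hyperbolic[OF hp] by (metis insert_is_Un)
  also have "\<dots> = {x + y | x y. x \<in> gen_eigenspace T a \<and> y \<in> gen_eigenspace T (inverse a)}"
    unfolding G by (rule span_Un)
  finally show "time_part B T = {x + y | x y. x \<in> gen_eigenspace T a \<and> y \<in> gen_eigenspace T (inverse a)}" .
  have vv: "B v v = 0" and wv: "B w v \<noteq> 0"
    using hp symmetric[of w v] unfolding hyperbolic_pair_def by auto
  have "y = 0" if y: "y \<in> span {v}" "y \<in> span {w}" for y
  proof -
    obtain c d where cd: "y = c *\<^sub>R v" "y = d *\<^sub>R w" using y unfolding span_singleton by blast
    have "B y v = 0" using cd(1) vv by simp
    then have "d * B w v = 0" unfolding cd(2) by simp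
    then show "y = 0" using cd(2) wv by simp
  qed
  then show "gen_eigenspace T a \<inter> gen_eigenspace T (inverse a) = {0}"
    unfolding G by (auto simp: span_zero)
qed

lemma continuous_T: "continuous_on S T"
  by (rule linear_continuous_on) (simp add: linear_conv_bounded_linear[symmetric] linear_T)

text \<open>T keeps time-like vectors in the half-cone of e, since the cone component is
  connected and meets the hyperplane orthogonal to e only at space-like vectors.\<close>
lemma future_timelike_preserved:
  assumes e: "B e e < 0" and x: "B x x < 0" "B x e < 0"
  shows "B (T x) e < 0"
proof (rule ccontr)
  assume "\<not> ?thesis"
  then have ge: "B (T x) e \<ge> 0" by simp
  let ?C = "connected_component_set (time_cone B) x"
  have xC: "x \<in> time_cone B" using x unfolding time_cone_def by simp
  have "connected ((\<lambda>y. B y e) ` ?C)"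
    by (rule connected_continuous_image[OF continuous_on_form[OF continuous_on_id continuous_on_const]]) simp
  moreover have "B x e \<in> (\<lambda>y. B y e) ` ?C" "B (T x) e \<in> (\<lambda>y. B y e) ` ?C"
    using xC preserves_cone_components[OF xC] by auto
  ultimately have "0 \<in> (\<lambda>y. B y e) ` ?C"
    using x(2) ge unfolding connected_iff_interval by (meson less_imp_le)
  then obtain y where y: "y \<in> ?C" "B y e = 0" by (metis imageE)
  then have "B y y < 0" using connected_component_subset unfolding time_cone_def by blast
  with timelike_complement_spacelike[OF e y(2)] show False by auto
qed

text \<open>The same for non-space-like vectors, by perturbing towards e.\<close>
lemma future_causal_preserved:
  assumes e: "B e e < 0" and x: "B x x \<le> 0" "B x e \<le> 0"
  shows "B (T x) e \<le> 0"
proof (rule ccontr)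
  assume "\<not> ?thesis"
  then have d: "B (T x) e > 0" by simp
  define K where "K = \<bar>B (T e) e\<bar> + 1"
  define \<epsilon> where "\<epsilon> = B (T x) e / K"
  have K: "K > 0" unfolding K_def by simp
  have ep: "\<epsilon> > 0" unfolding \<epsilon>_def using d K by simp
  have "B (x + \<epsilon> *\<^sub>R e) (x + \<epsilon> *\<^sub>R e) = B x x + 2 * \<epsilon> * B x e + \<epsilon> * \<epsilon> * B e e"
    using symmetric[of e x] by (simp add: algebra_simps)
  moreover have "\<epsilon> * \<epsilon> * B e e < 0" "2 * \<epsilon> * B x e \<le> 0"
    using ep e x(2) by (simp_all add: mult_pos_neg mult_nonneg_nonpos)
  ultimately have "B (x + \<epsilon> *\<^sub>R e) (x + \<epsilon> *\<^sub>R e) < 0" using x(1) by linarith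
  moreover have "B (x + \<epsilon> *\<^sub>R e) e < 0" using x(2) ep e by (simp add: mult_pos_neg add_nonpos_neg)
  ultimately have "B (T (x + \<epsilon> *\<^sub>R e)) e < 0" by (rule future_timelike_preserved[OF e])
  then have "B (T x) e + \<epsilon> * B (T e) e < 0" by simp
  moreover have "\<epsilon> * \<bar>B (T e) e\<bar> < \<epsilon> * K" using ep unfolding K_def by simp
  moreover have "\<epsilon> * K = B (T x) e" unfolding \<epsilon>_def using K by simp
  moreover have "- (\<epsilon> * \<bar>B (T e) e\<bar>) \<le> \<epsilon> * B (T e) e"
    using mult_left_mono[of "- \<bar>B (T e) e\<bar>" "B (T e) e" \<epsilon>] ep by simp
  ultimately show False by linarith
qed

text \<open>Brouwer's theorem on the causal slice, applied to the normalised action of T,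
  yields a non-space-like eigenvector with positive eigenvalue.\<close>
lemma causal_eigenvector:
  obtains x a where "x \<noteq> 0" "a > 0" "T x = a *\<^sub>R x" "B x x \<le> 0"
proof -
  obtain e where e: "B e e < 0" using timelike_exists by blast
  let ?S = "causal_slice e"
  have image_future: "B (T x) e < 0" if x: "x \<in> ?S" for x
  proof -
    have "B (T x) e \<le> 0" using future_causal_preserved[OF e] x unfolding causal_slice_def by simp
    moreover have "x \<noteq> 0" using x unfolding causal_slice_def by auto
    then have "T x \<noteq> 0" using inj_T by (metis T_zero injD)
    moreover have "B (T x) (T x) \<le> 0" using x unfolding causal_slice_def by simp
    ultimately show ?thesis using timelike_complement_spacelike[OF e, of "T x"] by fastforce
  qed
  define f where "f = (\<lambda>x. (- 1 / B (T x) e) *\<^sub>R T x)"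
  have "\<forall>x\<in>?S. B (T x) e \<noteq> 0" using image_future by (metis less_irrefl)
  then have "continuous_on ?S f"
    unfolding f_def
    by (intro continuous_on_scaleR continuous_on_divide continuous_on_const continuous_T
        continuous_on_form[OF continuous_T continuous_on_const])
  moreover have "f \<in> ?S \<rightarrow> ?S"
  proof
    fix x assume x: "x \<in> ?S"
    have "B (f x) e = -1" unfolding f_def using image_future[OF x] by simp
    moreover have "B (f x) (f x) = (1 / B (T x) e)^2 * B x x"
      unfolding f_def by (simp add: power2_eq_square)
    then have "B (f x) (f x) \<le> 0" using x unfolding causal_slice_def by (simp add: mult_nonneg_nonpos)
    ultimately show "f x \<in> ?S" unfolding causal_slice_def by simp
  qed
  ultimately obtain x where x: "x \<in> ?S" "f x = x"
    using brouwer[OF causal_slice_compact[OF e] causal_slice_convex[OF e]] causal_slice_nonempty[OF e]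
    by blast
  define a where "a = - B (T x) e"
  have a: "a > 0" unfolding a_def using image_future[OF x(1)] by simp
  have "a *\<^sub>R ((- 1 / B (T x) e) *\<^sub>R T x) = a *\<^sub>R x" using x(2) unfolding f_def by simp
  then have "T x = a *\<^sub>R x" unfolding a_def using image_future[OF x(1)] by simp
  moreover have "x \<noteq> 0" "B x x \<le> 0" using x(1) unfolding causal_slice_def by auto
  ultimately show ?thesis using that a by blast
qed

lemma fixed_vector_exists:
  assumes W: "subspace W" "T ` W \<subseteq> W" "W \<subseteq> gen_eigenspace T 1" and z: "z \<in> W" "z \<noteq> 0"
  obtains u where "u \<in> W" "u \<noteq> 0" "T u = u"
proof -
  let ?g = "\<lambda>w. T w - 1 *\<^sub>R w"
  have invariant: "?g ` W \<subseteq> W" using W(1,2) by (auto intro: subspace_diff)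
  have "(?g ^^ CARD('n)) z = 0" using W(3) z(1) unfolding gen_eigenspace_def by blast
  then obtain j where j: "(?g ^^ j) z \<noteq> 0" "?g ((?g ^^ j) z) = 0"
    using last_nonzero_iterate z(2) by blast
  moreover have "(?g ^^ j) z \<in> W" by (rule funpow_invariant[OF invariant z(1)])
  ultimately show ?thesis using that by simp
qed

end


section \<open>Minimal invariant time-like subspaces\<close>

locale minimal_timelike_subspace = lorentz_isometry B T
  for B :: "real^'n \<Rightarrow> real^'n \<Rightarrow> real" and T +
  fixes W :: "(real^'n) set"
  assumes subspace_W: "subspace W" and W_time_part: "W \<subseteq> time_part B T"
    and invariant_W: "T ` W \<subseteq> W" and time_like_W: "time_like B W"
    and minimal_W: "\<And>W'. subspace W' \<Longrightarrow> W' \<subseteq> W \<Longrightarrow> T ` W' \<subseteq> W' \<Longrightarrow> time_like B W' \<Longrightarrow> W' = W"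
begin

text \<open>No fixed vector of W is space-like: otherwise its orthogonal complement in W would
  be a smaller invariant time-like subspace.\<close>
lemma fixed_vector_not_spacelike:
  assumes u: "u \<in> W" "T u = u"
  shows "B u u \<le> 0"
proof (rule ccontr)
  assume "\<not> B u u \<le> 0"
  then have up: "B u u > 0" by simp
  obtain z where z: "z \<in> W" "B z z < 0" using time_like_W unfolding time_like_def by blast
  define W' where "W' = W \<inter> {y. B y u = 0}"
  have "subspace W'" unfolding W'_def
    by (rule subspace_inter[OF subspace_W real_vector.linear_subspace_kernel[OF linear_left]])
  moreover have "T ` W' \<subseteq> W'"
    using invariant_W isometry[of _ u] u(2) unfolding W'_def by auto
  moreover have "time_like B W'"
  proof -
    define z' where "z' = z - (B z u / B u u) *\<^sub>R u"
    have "z' \<in> W" unfolding z'_def using subspace_W z(1) u(1) by (simp add: subspace_diff subspace_scale)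
    moreover have "B z' u = 0" unfolding z'_def using up by simp
    moreover have "B z' z' = B z z - (B z u)^2 / B u u"
      unfolding z'_def using up symmetric[of u z] by (simp add: algebra_simps power2_eq_square)
    moreover have "(B z u)^2 / B u u \<ge> 0" using up by simp
    ultimately show ?thesis unfolding time_like_def W'_def using z(2) by (intro bexI[of _ z']) auto
  qed
  moreover have "W' \<subseteq> W" unfolding W'_def by blast
  ultimately have "W' = W" using minimal_W by blast
  then have "u \<in> W'" using u(1) by simp
  then show False using up unfolding W'_def by simp
qed

lemma timelike_fixed_vector_spans:
  assumes u: "u \<in> W" "T u = u" "B u u < 0"
  shows "W = span {u}"
proof (rule minimal_W[symmetric])
  show "span {u} \<subseteq> W" using u(1) subspace_W by (simp add: span_minimal)
  show "T ` span {u} \<subseteq> span {u}" using u(2) by (auto simp: span_singleton)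
  show "time_like B (span {u})" using u(3) span_base[of u "{u}"] unfolding time_like_def by blast
qed (rule subspace_span)

text \<open>Alternative (ii): if W has no time-like fixed vector, any nonzero fixed vector u0
  spans the fixed space of W, since the sum of two fixed vectors is again null.\<close>
lemma fixed_space_null_line:
  assumes no_timelike: "\<not> (\<exists>u\<in>W. T u = u \<and> B u u < 0)"
    and u0: "u0 \<in> W" "u0 \<noteq> 0" "T u0 = u0"
  shows "B u0 u0 = 0" and "{w\<in>W. T w - w = 0} = span {u0}"
proof -
  have null: "B u u = 0" if "u \<in> W" "T u = u" for u
    using fixed_vector_not_spacelike[OF that] no_timelike that by force
  show u00: "B u0 u0 = 0" using null u0 by blast
  have "y \<in> span {u0}" if y: "y \<in> W" "T y = y" for y
  proof -
    have "y + u0 \<in> W" using y(1) u0(1) subspace_W by (simp add: subspace_add)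
    then have "B (y + u0) (y + u0) = 0" using y u0 by (intro null) auto
    then have "B y u0 = 0" using null[OF y] u00 symmetric[of u0 y] by simp
    then show ?thesis using null_orthogonal_proportional[OF null[OF y] u00 _ u0(2)]
      by (auto simp: span_singleton)
  qed
  moreover have "span {u0} \<subseteq> {w\<in>W. T w - w = 0}"
    using subspace_W u0(1,3) by (auto simp: span_singleton subspace_scale)
  ultimately show "{w\<in>W. T w - w = 0} = span {u0}" by auto
qed

text \<open>Alternative (iii): if V_t is a hyperbolic plane, minimality forces W = V_t, since a
  time-like vector of W has nonzero components along both null eigenvectors.\<close>
lemma hyperbolic_plane_is_W:
  assumes hp: "hyperbolic_pair a x w"
  shows "W = span {x, w}"
proof
  have tp: "time_part B T = span {x, w}" using time_part_hyperbolic[OF hp] .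
  show "W \<subseteq> span {x, w}" using W_time_part tp by simp
  have a: "a > 0" "a \<noteq> 1" and Tx: "T x = a *\<^sub>R x" and Tw: "T w = inverse a *\<^sub>R w"
    and xx: "B x x = 0" and ww: "B w w = 0"
    using hp unfolding hyperbolic_pair_def by auto
  have ia: "a - inverse a \<noteq> 0" using inverse_ne_self[OF a] by simp
  obtain z where z: "z \<in> W" "B z z < 0" using time_like_W unfolding time_like_def by blast
  obtain \<alpha> \<beta> where zab: "z = \<alpha> *\<^sub>R x + \<beta> *\<^sub>R w"
    using z(1) W_time_part tp span_pair_decompose by blast
  have "B z z = 2 * \<alpha> * \<beta> * B x w" unfolding zab using xx ww symmetric[of w x] by (simp add: algebra_simps)
  then have ab: "\<alpha> \<noteq> 0" "\<beta> \<noteq> 0" using z(2) by auto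
  have Tz: "T z - inverse a *\<^sub>R z \<in> W" "T z - a *\<^sub>R z \<in> W"
    using invariant_W z(1) subspace_W by (auto simp: subspace_diff subspace_scale)
  have "T z - inverse a *\<^sub>R z = (\<alpha> * (a - inverse a)) *\<^sub>R x"
    "T z - a *\<^sub>R z = (- \<beta> * (a - inverse a)) *\<^sub>R w"
    unfolding zab using Tx Tw by (simp_all add: algebra_simps)
  moreover have unscale: "y \<in> W" if "c *\<^sub>R y \<in> W" "c \<noteq> 0" for c y
    using subspace_scale[OF subspace_W that(1), of "inverse c"] that(2) by simp
  ultimately have "x \<in> W" "w \<in> W"
    using unscale[of "\<alpha> * (a - inverse a)" x] unscale[of "- \<beta> * (a - inverse a)" w] Tz ab ia
    by simp_all
  then show "span {x, w} \<subseteq> W" using subspace_W by (simp add: span_minimal)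
qed

end


section \<open>The three alternatives\<close>

definition fixed_timelike_alternative ::
    "(real^'n \<Rightarrow> real^'n \<Rightarrow> real) \<Rightarrow> (real^'n \<Rightarrow> real^'n) \<Rightarrow> (real^'n) set \<Rightarrow> bool" where
  "fixed_timelike_alternative B T W \<longleftrightarrow> time_part B T = gen_eigenspace T 1 \<and> dim W = 1 \<and>
     (\<exists>v. B v v < 0 \<and> T v = v \<and> W = span {v})"

definition fixed_lightlike_alternative ::
    "(real^'n \<Rightarrow> real^'n \<Rightarrow> real) \<Rightarrow> (real^'n \<Rightarrow> real^'n) \<Rightarrow> (real^'n) set \<Rightarrow> bool" where
  "fixed_lightlike_alternative B T W \<longleftrightarrow> time_part B T = gen_eigenspace T 1 \<and> dim W \<ge> 2 \<and>
     (\<exists>v. light_like B v \<and> T v = v \<and> {w\<in>W. T w - w = 0} = span {v})"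

definition hyperbolic_alternative ::
    "(real^'n \<Rightarrow> real^'n \<Rightarrow> real) \<Rightarrow> (real^'n \<Rightarrow> real^'n) \<Rightarrow> (real^'n) set \<Rightarrow> bool" where
  "hyperbolic_alternative B T W \<longleftrightarrow> (\<exists>l::real. l > 0 \<and> l \<noteq> 1 \<and>
     time_part B T = {x + y | x y. x \<in> gen_eigenspace T l \<and> y \<in> gen_eigenspace T (inverse l)} \<and>
     gen_eigenspace T l \<inter> gen_eigenspace T (inverse l) = {0} \<and>
     dim W = 2 \<and>
     (\<exists>u w. light_like B u \<and> light_like B w \<and> T u = l *\<^sub>R u \<and>
            T w = inverse l *\<^sub>R w \<and> W = span {u, w}))"

text \<open>A plane spanned by eigenvectors for eigenvalues different from 1 has no fixed vector;
  this separates alternatives (ii) and (iii).\<close>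
lemma no_fixed_vector_in_eigenplane:
  fixes T :: "real^'n \<Rightarrow> real^'n"
  assumes "linear T" "T u = l *\<^sub>R u" "T w = l' *\<^sub>R w" "l \<noteq> 1" "l' \<noteq> 1"
    and "v \<in> span {u, w}" "T v = v"
  shows "v = 0"
proof -
  obtain \<alpha> \<beta> where v: "v = \<alpha> *\<^sub>R u + \<beta> *\<^sub>R w" using assms(6) span_pair_decompose by blast
  define h where "h = (\<lambda>z. T (T z - l *\<^sub>R z) - l' *\<^sub>R (T z - l *\<^sub>R z))"
  have "h v = ((1 - l) * (1 - l')) *\<^sub>R v" unfolding h_def using assms(1,7)
    by (simp add: linear_diff linear_cmul algebra_simps)
  moreover have "h v = 0" unfolding h_def v using assms(1-3)
    by (simp add: linear_add linear_diff linear_cmul algebra_simps)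
  ultimately show ?thesis using assms(4,5) by simp
qed

lemma alternatives_exclusive:
  fixes B :: "real^'n \<Rightarrow> real^'n \<Rightarrow> real"
  assumes "linear T"
  shows "\<not> (fixed_timelike_alternative B T W \<and> fixed_lightlike_alternative B T W)"
    and "\<not> (fixed_timelike_alternative B T W \<and> hyperbolic_alternative B T W)"
    and "\<not> (fixed_lightlike_alternative B T W \<and> hyperbolic_alternative B T W)"
proof -
  show "\<not> (fixed_timelike_alternative B T W \<and> fixed_lightlike_alternative B T W)"
    "\<not> (fixed_timelike_alternative B T W \<and> hyperbolic_alternative B T W)"
    unfolding fixed_timelike_alternative_def fixed_lightlike_alternative_def
      hyperbolic_alternative_def by auto
  show "\<not> (fixed_lightlike_alternative B T W \<and> hyperbolic_alternative B T W)"
  proof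
    assume C: "fixed_lightlike_alternative B T W \<and> hyperbolic_alternative B T W"
    then obtain v where v: "light_like B v" "T v = v" "{w\<in>W. T w - w = 0} = span {v}"
      unfolding fixed_lightlike_alternative_def by blast
    from C obtain l u w where l: "l > 0" "l \<noteq> 1" "T u = l *\<^sub>R u" "T w = inverse l *\<^sub>R w"
      "W = span {u, w}" unfolding hyperbolic_alternative_def by blast
    have "v \<in> W" using v(3) span_base[of v "{v}"] by blast
    then have "v = 0" using no_fixed_vector_in_eigenplane[OF assms l(3,4)] l v(2) by simp
    with v(1) show False unfolding light_like_def by simp
  qed
qed

context minimal_timelike_subspace begin

text \<open>Case analysis on the eigenvalue a of the non-space-like eigenvector from Brouwer:
  a = 1 gives (i) or (ii), a \<noteq> 1 gives (iii).\<close>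
lemma alternatives_exhaustive:
  "fixed_timelike_alternative B T W \<or> fixed_lightlike_alternative B T W \<or> hyperbolic_alternative B T W"
proof -
  obtain x a where x: "x \<noteq> 0" "a > 0" "T x = a *\<^sub>R x" "B x x \<le> 0" by (rule causal_eigenvector)
  obtain z where z: "z \<in> W" "B z z < 0" using time_like_W unfolding time_like_def by blast
  show ?thesis
  proof (cases "a = 1")
    case True
    then have tp: "time_part B T = gen_eigenspace T 1" using time_part_fixed_vector x by simp
    show ?thesis
    proof (cases "\<exists>u\<in>W. T u = u \<and> B u u < 0")
      case True
      then obtain u where u: "u \<in> W" "T u = u" "B u u < 0" by blast
      then have "W = span {u}" "dim W = 1"
        using timelike_fixed_vector_spans[OF u] by auto
      then show ?thesis unfolding fixed_timelike_alternative_def using tp u by blast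
    next
      case False
      obtain u0 where u0: "u0 \<in> W" "u0 \<noteq> 0" "T u0 = u0"
        using fixed_vector_exists[OF subspace_W invariant_W _ z(1)] W_time_part tp z(2) by force
      note line = fixed_space_null_line[OF False u0]
      have "z \<notin> span {u0}" using z(2) line(1) by (auto simp: span_singleton)
      then have "dim W \<ge> 2" using dim_ge_2[OF subspace_W u0(1) z(1) u0(2)] by simp
      then show ?thesis unfolding fixed_lightlike_alternative_def light_like_def
        using tp u0 line by blast
    qed
  next
    case False
    obtain w where hp: "hyperbolic_pair a x w" using hyperbolic_pair_exists x False by blast
    note W = hyperbolic_plane_is_W[OF hp]
    have "B x w \<noteq> 0" "B w w = 0" using hp unfolding hyperbolic_pair_def by auto
    then have "w \<noteq> 0" "x \<notin> span {w}" by (auto simp: span_singleton)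
    then have "dim W = 2" unfolding W dim_span by (simp add: dim_insert)
    then show ?thesis unfolding hyperbolic_alternative_def light_like_def
      using hp W time_part_hyperbolic_decomposition[OF hp] unfolding hyperbolic_pair_def by fastforce
  qed
qed

end


theorem theorem2p11:
  fixes B :: "real^'n \<Rightarrow> real^'n \<Rightarrow> real"
    and T :: "real^'n \<Rightarrow> real^'n"
    and W :: "(real^'n) set"
  assumes "lorentz_form B"
    and "T \<in> PO B"
    and "subspace W" and "W \<subseteq> time_part B T" and "T ` W \<subseteq> W" and "time_like B W"
    and "\<And>W'. subspace W' \<Longrightarrow> W' \<subseteq> W \<Longrightarrow> T ` W' \<subseteq> W' \<Longrightarrow> time_like B W' \<Longrightarrow> W' = W"
  defines "C1 \<equiv> time_part B T = gen_eigenspace T 1 \<and> dim W = 1 \<and>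
              (\<exists>v. B v v < 0 \<and> T v = v \<and> W = span {v})"
    and "C2 \<equiv> time_part B T = gen_eigenspace T 1 \<and> dim W \<ge> 2 \<and>
              (\<exists>v. light_like B v \<and> T v = v \<and> {w\<in>W. T w - w = 0} = span {v})"
    and "C3 \<equiv> (\<exists>l::real. l > 0 \<and> l \<noteq> 1 \<and>
              time_part B T = {x + y | x y. x \<in> gen_eigenspace T l \<and> y \<in> gen_eigenspace T (inverse l)} \<and>
              gen_eigenspace T l \<inter> gen_eigenspace T (inverse l) = {0} \<and>
              dim W = 2 \<and>
              (\<exists>u w. light_like B u \<and> light_like B w \<and> T u = l *\<^sub>R u \<and>
                     T w = inverse l *\<^sub>R w \<and> W = span {u, w}))"
  shows "(C1 \<or> C2 \<or> C3) \<and> \<not> (C1 \<and> C2) \<and> \<not> (C1 \<and> C3) \<and> \<not> (C2 \<and> C3)"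
proof -
  interpret minimal_timelike_subspace B T W
    using assms(1-7) by unfold_locales auto
  have "C1 = fixed_timelike_alternative B T W" "C2 = fixed_lightlike_alternative B T W"
    "C3 = hyperbolic_alternative B T W"
    unfolding C1_def C2_def C3_def fixed_timelike_alternative_def fixed_lightlike_alternative_def
      hyperbolic_alternative_def by (rule refl)+
  then show ?thesis
    using alternatives_exhaustive alternatives_exclusive[OF linear_T] by simp
qed

end
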